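(* Let $F$, $X_0$, $B$, $C$ be as in the context. Suppose $\dim\ker C=1$, let $T\subset\mathbb{R}^m$ be a linear subspace of codimension 1 with $T\cap\ker C=\{0\}$, and suppose $F(X)=0$ has a nonconstant analytic family of solutions $X(t)=\sum_{p=0}^\infty X_pt^p$ with initial term $X_0$. Then $F(X)=0$ admits a $T$-standard formal solution $Y(t)=\sum_{p=0}^\infty Y_pt^p$ with $Y_0=X_0$.
   Context: Let $m,n\ge 1$ and let $F=(F_1,\dots,F_n):\mathbb{R}^m\to\mathbb{R}^n$, where each component is a polynomial of degree at most 2 written as $F_k(X)=\sum_{i=1}^m\sum_{j=1}^m\alpha^k_{ij}x_ix_j+\sum_{i=1}^m\beta^k_ix_i+\gamma^k$ for $X=(x_1,\dots,x_m)$, with real coefficients and $\alpha^k_{ij}=\alpha^k_{ji}$. Fix $X_0\in\mathbb{R}^m$ with $F(X_0)=0$. Define the bilinear map $B:\mathbb{R}^m\times\mathbb{R}^m\to\mathbb{R}^n$ by $B(X,Y)_k=\sum_{i,j=1}^m\alpha^k_{ij}x_iy_j$, the linear map $A:\mathbb{R}^m\to\mathbb{R}^n$ by $(AX)_k=\sum_{i=1}^m\beta^k_ix_i$, and the linear map $C:\mathbb{R}^m\to\mathbb{R}^n$ by $CX=B(X_0,X)+B(X,X_0)+AX$. An analytic family of solutions with initial term $X_0$ is a power series $X(t)=\sum_{p=0}^\infty X_pt^p$ with $X_p\in\mathbb{R}^m$, positive radius of convergence, constant term equal to $X_0$, and $F(X(t))=0$ for all sufficiently small $t$; it is nonconstant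 if $X_p\neq 0$ for some $p\ge 1$. Given a codimension-1 subspace $T$ with $T\cap\ker C=\{0\}$, a $T$-standard formal solution to $F(X)=0$ is a formal power series $Y(t)=\sum_{p=0}^\infty Y_pt^p$ with $Y_p\in\mathbb{R}^m$ (no convergence required) such that: (1) $CY_q=-\sum_{p=1}^{q-1}B(Y_p,Y_{q-p})$ for every $q\ge 1$; (2) $Y_1\neq 0$; (3) $Y_p\in T$ for every $p\ge 2$. *)

theory Defs
  imports "HOL-Analysis.Analysis"
begin

definition quadF :: "('n \<Rightarrow> 'm::finite \<Rightarrow> 'm \<Rightarrow> real) \<Rightarrow> ('n \<Rightarrow> 'm \<Rightarrow> real) \<Rightarrow> ('n::finite \<Rightarrow> real)
    \<Rightarrow> real^'m \<Rightarrow> real^'n" where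
  "quadF \<alpha> \<beta> \<gamma> X = (\<chi> k. (\<Sum>i\<in>UNIV. \<Sum>j\<in>UNIV. \<alpha> k i j * X$i * X$j)
                         + (\<Sum>i\<in>UNIV. \<beta> k i * X$i) + \<gamma> k)"

definition bilinB :: "('n::finite \<Rightarrow> 'm::finite \<Rightarrow> 'm \<Rightarrow> real) \<Rightarrow> real^'m \<Rightarrow> real^'m \<Rightarrow> real^'n" where
  "bilinB \<alpha> X Y = (\<chi> k. \<Sum>i\<in>UNIV. \<Sum>j\<in>UNIV. \<alpha> k i j * X$i * Y$j)"

definition linA :: "('n::finite \<Rightarrow> 'm::finite \<Rightarrow> real) \<Rightarrow> real^'m \<Rightarrow> real^'n" where
  "linA \<beta> X = (\<chi> k. \<Sum>i\<in>UNIV. \<beta> k i * X$i)"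

definition linC :: "('n::finite \<Rightarrow> 'm::finite \<Rightarrow> 'm \<Rightarrow> real) \<Rightarrow> ('n \<Rightarrow> 'm \<Rightarrow> real) \<Rightarrow> real^'m
    \<Rightarrow> real^'m \<Rightarrow> real^'n" where
  "linC \<alpha> \<beta> X0 X = bilinB \<alpha> X0 X + bilinB \<alpha> X X0 + linA \<beta> X"

definition analytic_family ::
    "('n::finite \<Rightarrow> 'm::finite \<Rightarrow> 'm \<Rightarrow> real) \<Rightarrow> ('n \<Rightarrow> 'm \<Rightarrow> real) \<Rightarrow> ('n \<Rightarrow> real)
     \<Rightarrow> real^'m \<Rightarrow> (nat \<Rightarrow> real^'m) \<Rightarrow> bool" where
  "analytic_family \<alpha> \<beta> \<gamma> X0 Xs \<longleftrightarrow>
     conv_radius Xs > 0 \<and> Xs 0 = X0 \<and>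
     (\<exists>\<epsilon>>0. \<forall>t::real. \<bar>t\<bar> < \<epsilon> \<longrightarrow> quadF \<alpha> \<beta> \<gamma> (\<Sum>p. t ^ p *\<^sub>R Xs p) = 0)"

definition nonconstant_series :: "(nat \<Rightarrow> real^'m::finite) \<Rightarrow> bool" where
  "nonconstant_series Xs \<longleftrightarrow> (\<exists>p\<ge>1. Xs p \<noteq> 0)"

definition T_standard_formal_solution ::
    "('n::finite \<Rightarrow> 'm::finite \<Rightarrow> 'm \<Rightarrow> real) \<Rightarrow> ('n \<Rightarrow> 'm \<Rightarrow> real) \<Rightarrow> real^'m
     \<Rightarrow> (real^'m) set \<Rightarrow> (nat \<Rightarrow> real^'m) \<Rightarrow> bool" where
  "T_standard_formal_solution \<alpha> \<beta> X0 T Ys \<longleftrightarrow>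
     (\<forall>q\<ge>1. linC \<alpha> \<beta> X0 (Ys q) = - (\<Sum>p=1..q-1. bilinB \<alpha> (Ys p) (Ys (q - p)))) \<and>
     Ys 1 \<noteq> 0 \<and>
     (\<forall>p\<ge>2. Ys p \<in> T)"

end

theory Submission
  imports Defs "HOL-Analysis.FPS_Convergence"
begin

(* Write X(t) = X0 + Z(t). As F(X0) = 0, F(X0 + Z) = C Z + B(Z,Z), so by the identity theorem
   for power series Z is a formal solution of C Z + B(Z,Z) = 0 without constant term. The
   coefficients Y_q are chosen one by one in T; this is possible as long as
   R_q = sum_{p=1}^{q-1} B(Y_p, Y_{q-p}) lies in the range of C. To see that it does, write
   Z_n = phi_n Y_1 + (element of T), where Y_1 spans ker C. The truncation
   P(s) = sum_{p<q} Y_p s^p satisfies C P + B(P,P) = s^q H(s) with H(0) = R_q, so the remainder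
   E = Z - P o phi has all its coefficients in T and solves
   C E + B(P o phi, E) + B(E, P o phi) + B(E,E) = - phi^q (H o phi).
   Since T and ker C meet only in 0, comparing coefficients shows that E vanishes below the
   order N of phi^q, and the coefficient of t^N then reads C E_N = - (phi^q)_N R_q.
   Here phi is nonzero, since otherwise the same comparison forces Z = 0. *)

section \<open>Linear algebra and the recursive choice of coefficients\<close>

lemma codim1_decomposition:
  fixes T :: "'a::euclidean_space set"
  assumes T: "subspace T" "dim T = DIM('a) - 1" and v: "v \<notin> T"
  shows "\<exists>c. x - c *\<^sub>R v \<in> T"
proof -
  have span_T: "span T = T"
    using T(1) by (rule span_eq_iff[THEN iffD2])
  have "dim (insert v T) = DIM('a)"
    using T v by (simp add: dim_insert span_T)
  then have "span (insert v T) = UNIV"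
    by (simp add: dim_eq_full)
  then show ?thesis
    by (auto simp: span_insert span_T)
qed

lemma range_linear_eq_image_complement:
  assumes L: "linear L" "L v = 0" and dec: "\<And>x. \<exists>c. x - c *\<^sub>R v \<in> T"
  shows "range L = L ` T"
proof
  show "range L \<subseteq> L ` T"
  proof
    fix y assume "y \<in> range L"
    then obtain x where "y = L x" by blast
    moreover obtain c where "x - c *\<^sub>R v \<in> T" using dec by blast
    moreover have "L (x - c *\<^sub>R v) = L x"
      using L by (simp add: linear_diff linear_scale)
    ultimately show "y \<in> L ` T" by (metis image_eqI)
  qed
qed auto

function (sequential) standard_coeffs ::
    "('a \<Rightarrow> 'b::ab_group_add) \<Rightarrow> ('a \<Rightarrow> 'a \<Rightarrow> 'b) \<Rightarrow> 'a set \<Rightarrow> 'a \<Rightarrow> 'a \<Rightarrow> nat \<Rightarrow> 'a" where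
  "standard_coeffs L b T y0 y1 0 = y0"
| "standard_coeffs L b T y0 y1 (Suc 0) = y1"
| "standard_coeffs L b T y0 y1 q = (SOME y. y \<in> T \<and>
     L y = - (\<Sum>p=1..q-1. b (standard_coeffs L b T y0 y1 p) (standard_coeffs L b T y0 y1 (q - p))))"
  by pat_completeness auto
termination by (relation "Wellfounded.measure (\<lambda>(_, _, _, _, _, q). q)") auto

lemma standard_coeffs_solve:
  fixes L :: "'a \<Rightarrow> 'b::ab_group_add" and b :: "'a \<Rightarrow> 'a \<Rightarrow> 'b"
    and T :: "'a set" and y0 y1 :: 'a
  assumes Y_def: "Y = standard_coeffs L b T y0 y1"
    and L1: "L y1 = 0"
    and solvable: "\<And>q. 2 \<le> q \<Longrightarrow>
      (\<And>p. 1 \<le> p \<Longrightarrow> p < q \<Longrightarrow> L (Y p) = - (\<Sum>l=1..p-1. b (Y l) (Y (p - l)))) \<Longrightarrow>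
      (\<And>p. 2 \<le> p \<Longrightarrow> p < q \<Longrightarrow> Y p \<in> T) \<Longrightarrow>
      - (\<Sum>l=1..q-1. b (Y l) (Y (q - l))) \<in> L ` T"
  shows "(1 \<le> q \<longrightarrow> L (Y q) = - (\<Sum>l=1..q-1. b (Y l) (Y (q - l)))) \<and> (2 \<le> q \<longrightarrow> Y q \<in> T)"
proof (induction q rule: less_induct)
  case (less q)
  consider "q = 0" | "q = 1" | n where "q = Suc (Suc n)"
    by (metis One_nat_def not0_implies_Suc)
  then show ?case
  proof cases
    case 2
    then show ?thesis by (simp add: Y_def L1)
  next
    case (3 n)
    have rec: "L (Y p) = - (\<Sum>l=1..p-1. b (Y l) (Y (p - l)))" if "1 \<le> p" "p < q" for p
      using less.IH that by blast
    have YT: "Y p \<in> T" if "2 \<le> p" "p < q" for p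
      using less.IH that by blast
    have "- (\<Sum>l=1..q-1. b (Y l) (Y (q - l))) \<in> L ` T"
      using 3 by (intro solvable rec YT) simp_all
    then have ex: "\<exists>y. y \<in> T \<and> L y = - (\<Sum>l=1..q-1. b (Y l) (Y (q - l)))"
      by (auto elim!: imageE)
    have Yq: "Y q = (SOME y. y \<in> T \<and> L y = - (\<Sum>l=1..q-1. b (Y l) (Y (q - l))))"
      unfolding Y_def 3 by (rule standard_coeffs.simps(3))
    have "Y q \<in> T \<and> L (Y q) = - (\<Sum>l=1..q-1. b (Y l) (Y (q - l)))"
      unfolding Yq using ex by (rule someI_ex)
    then show ?thesis by simp
  qed simp
qed

lemma sum_atLeastAtMost_trim_ends:
  fixes g :: "nat \<Rightarrow> 'a::comm_monoid_add"
  assumes "g 0 = 0" "g s = 0"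
  shows "(\<Sum>l=0..s. g l) = (\<Sum>l=1..s-1. g l)"
proof (rule sum.mono_neutral_right)
  show "\<forall>i\<in>{0..s} - {1..s-1}. g i = 0"
  proof
    fix i assume "i \<in> {0..s} - {1..s-1}"
    then have "i = 0 \<or> i = s" by auto
    with assms show "g i = 0" by auto
  qed
qed auto

section \<open>Formal power series with vector coefficients\<close>

definition linC_matrix ::
    "('n::finite \<Rightarrow> 'm::finite \<Rightarrow> 'm \<Rightarrow> real) \<Rightarrow> ('n \<Rightarrow> 'm \<Rightarrow> real) \<Rightarrow> real^'m \<Rightarrow> 'n \<Rightarrow> 'm \<Rightarrow> real" where
  "linC_matrix \<alpha> \<beta> X0 k i = (\<Sum>j\<in>UNIV. \<alpha> k j i * X0 $ j) + (\<Sum>j\<in>UNIV. \<alpha> k i j * X0 $ j) + \<beta> k i"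

lemma linC_eq_matrix: "linC \<alpha> \<beta> X0 X $ k = (\<Sum>i\<in>UNIV. linC_matrix \<alpha> \<beta> X0 k i * X $ i)"
proof -
  have left: "(\<Sum>i\<in>UNIV. \<Sum>j\<in>UNIV. \<alpha> k i j * X0 $ i * X $ j)
      = (\<Sum>i\<in>UNIV. (\<Sum>j\<in>UNIV. \<alpha> k j i * X0 $ j) * X $ i)"
    by (subst sum.swap) (simp add: sum_distrib_right)
  have right: "(\<Sum>i\<in>UNIV. \<Sum>j\<in>UNIV. \<alpha> k i j * X $ i * X0 $ j)
      = (\<Sum>i\<in>UNIV. (\<Sum>j\<in>UNIV. \<alpha> k i j * X0 $ j) * X $ i)"
    by (simp add: sum_distrib_left sum_distrib_right mult_ac)
  show ?thesis
    unfolding linC_def bilinB_def linA_def linC_matrix_def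
    by (simp add: left right distrib_right sum.distrib)
qed

lemma linear_linC: "linear (linC \<alpha> \<beta> X0)"
  by (rule linearI)
     (simp_all add: vec_eq_iff linC_eq_matrix distrib_left sum.distrib sum_distrib_left mult_ac)

lemma quadF_add:
  "quadF \<alpha> \<beta> \<gamma> (X0 + D) = quadF \<alpha> \<beta> \<gamma> X0 + linC \<alpha> \<beta> X0 D + bilinB \<alpha> D D"
  unfolding quadF_def linC_def bilinB_def linA_def
  by (simp add: vec_eq_iff algebra_simps sum.distrib)

lemma bilinB_zero [simp]: "bilinB \<alpha> 0 X = 0" "bilinB \<alpha> X 0 = 0"
  by (simp_all add: bilinB_def vec_eq_iff)

(* A power series with coefficients in real^'m is represented by the family of its coordinate
   series. *)
definition fps_lin :: "('n \<Rightarrow> 'm::finite \<Rightarrow> real) \<Rightarrow> ('m \<Rightarrow> real fps) \<Rightarrow> 'n \<Rightarrow> real fps" where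
  "fps_lin c U k = (\<Sum>i\<in>UNIV. fps_const (c k i) * U i)"

definition fps_bilin ::
    "('n \<Rightarrow> 'm::finite \<Rightarrow> 'm \<Rightarrow> real) \<Rightarrow> ('m \<Rightarrow> real fps) \<Rightarrow> ('m \<Rightarrow> real fps) \<Rightarrow> 'n \<Rightarrow> real fps" where
  "fps_bilin \<alpha> U V k = (\<Sum>i\<in>UNIV. \<Sum>j\<in>UNIV. fps_const (\<alpha> k i j) * U i * V j)"

definition coeff_vec :: "('m::finite \<Rightarrow> real fps) \<Rightarrow> nat \<Rightarrow> real^'m" where
  "coeff_vec U n = (\<chi> i. fps_nth (U i) n)"

definition vanishes_below :: "('m::finite \<Rightarrow> real fps) \<Rightarrow> nat \<Rightarrow> bool" where
  "vanishes_below U N \<longleftrightarrow> (\<forall>n<N. coeff_vec U n = 0)"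

lemma coeff_vec_add [simp]: "coeff_vec (\<lambda>k. U k + V k) n = coeff_vec U n + coeff_vec V n"
  by (simp add: coeff_vec_def vec_eq_iff)

lemma coeff_vec_diff [simp]: "coeff_vec (\<lambda>k. U k - V k) n = coeff_vec U n - coeff_vec V n"
  by (simp add: coeff_vec_def vec_eq_iff)

lemma coeff_vec_zero [simp]: "coeff_vec (\<lambda>k. 0) n = 0"
  by (simp add: coeff_vec_def vec_eq_iff)

lemma vanishes_below_Suc:
  "vanishes_below U (Suc n) \<longleftrightarrow> vanishes_below U n \<and> coeff_vec U n = 0"
  by (auto simp: vanishes_below_def less_Suc_eq)

lemma coeff_vec_fps_lin:
  "coeff_vec (fps_lin (linC_matrix \<alpha> \<beta> X0) U) n = linC \<alpha> \<beta> X0 (coeff_vec U n)"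
  by (simp add: vec_eq_iff coeff_vec_def fps_lin_def linC_eq_matrix fps_sum_nth)

lemma coeff_vec_fps_bilin:
  "coeff_vec (fps_bilin \<alpha> U V) n = (\<Sum>l=0..n. bilinB \<alpha> (coeff_vec U l) (coeff_vec V (n - l)))"
proof -
  have "fps_nth (fps_bilin \<alpha> U V k) n
      = (\<Sum>i\<in>UNIV. \<Sum>j\<in>UNIV. \<Sum>l=0..n. \<alpha> k i j * fps_nth (U i) l * fps_nth (V j) (n - l))" for k
    by (simp only: fps_bilin_def fps_sum_nth mult.assoc fps_mult_left_const_nth)
       (simp add: fps_mult_nth sum_distrib_left mult.assoc)
  also have "\<dots> k = (\<Sum>i\<in>UNIV. \<Sum>l=0..n. \<Sum>j\<in>UNIV. \<alpha> k i j * fps_nth (U i) l * fps_nth (V j) (n - l))" for k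
    by (rule sum.cong[OF refl], rule sum.swap)
  also have "\<dots> k = (\<Sum>l=0..n. \<Sum>i\<in>UNIV. \<Sum>j\<in>UNIV. \<alpha> k i j * fps_nth (U i) l * fps_nth (V j) (n - l))" for k
    by (rule sum.swap)
  finally show ?thesis
    by (simp add: vec_eq_iff coeff_vec_def bilinB_def sum_component)
qed

lemma fps_lin_add: "fps_lin c (\<lambda>i. U i + V i) k = fps_lin c U k + fps_lin c V k"
  by (simp add: fps_lin_def distrib_left sum.distrib)

lemma fps_bilin_add:
  "fps_bilin \<alpha> (\<lambda>i. U i + V i) (\<lambda>i. U i + V i) k
     = fps_bilin \<alpha> U U k + fps_bilin \<alpha> U V k + fps_bilin \<alpha> V U k + fps_bilin \<alpha> V V k"
  by (simp add: fps_bilin_def distrib_left distrib_right sum.distrib algebra_simps)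

lemma fps_bilin_zero [simp]: "fps_bilin \<alpha> (\<lambda>i. 0) V k = 0" "fps_bilin \<alpha> V (\<lambda>i. 0) k = 0"
  by (simp_all add: fps_bilin_def)

lemma fps_lin_compose: "fps_lin c U k oo \<phi> = fps_lin c (\<lambda>i. U i oo \<phi>) k"
  by (simp add: fps_lin_def fps_compose_sum_distrib fps_const_mult_apply_left)

lemma fps_bilin_compose:
  assumes "fps_nth \<phi> 0 = 0"
  shows "fps_bilin \<alpha> U V k oo \<phi> = fps_bilin \<alpha> (\<lambda>i. U i oo \<phi>) (\<lambda>i. V i oo \<phi>) k"
  by (simp add: fps_bilin_def fps_compose_sum_distrib fps_compose_mult_distrib[OF assms])

lemma vanishes_below_fps_bilin:
  assumes "vanishes_below U a" "vanishes_below V b"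
  shows "vanishes_below (fps_bilin \<alpha> U V) (a + b)"
  unfolding vanishes_below_def coeff_vec_fps_bilin
proof (intro allI impI sum.neutral ballI)
  fix n l assume "n < a + b" "l \<in> {0..n}"
  then have "l < a \<or> n - l < b" by auto
  then show "bilinB \<alpha> (coeff_vec U l) (coeff_vec V (n - l)) = 0"
    using assms by (auto simp: vanishes_below_def bilinB_def vec_eq_iff)
qed

lemma vanishes_below_mono: "vanishes_below U a \<Longrightarrow> b \<le> a \<Longrightarrow> vanishes_below U b"
  by (simp add: vanishes_below_def)

lemma coeff_vec_perturbed:
  assumes "vanishes_below G 1" "vanishes_below E n" "1 \<le> n"
  shows "coeff_vec (\<lambda>k. fps_lin (linC_matrix \<alpha> \<beta> X0) E k + fps_bilin \<alpha> G E k
            + fps_bilin \<alpha> E G k + fps_bilin \<alpha> E E k + \<Psi> k) n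
         = linC \<alpha> \<beta> X0 (coeff_vec E n) + coeff_vec \<Psi> n"
proof -
  have "vanishes_below (fps_bilin \<alpha> G E) (Suc n)" "vanishes_below (fps_bilin \<alpha> E G) (Suc n)"
    "vanishes_below (fps_bilin \<alpha> E E) (Suc n)"
    using vanishes_below_fps_bilin[OF assms(1,2)] vanishes_below_fps_bilin[OF assms(2,1)]
      vanishes_below_mono[OF vanishes_below_fps_bilin[OF assms(2,2)], of "Suc n"] assms(3)
    by simp_all
  then show ?thesis
    by (simp add: vanishes_below_Suc coeff_vec_fps_lin)
qed

lemma vanishes_below_transversal:
  assumes Tker: "T \<inter> {X. linC \<alpha> \<beta> X0 X = 0} = {0}"
    and eq: "\<And>k. fps_lin (linC_matrix \<alpha> \<beta> X0) E k + fps_bilin \<alpha> G E k + fps_bilin \<alpha> E G k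
                + fps_bilin \<alpha> E E k + \<Psi> k = 0"
    and G1: "vanishes_below G 1" and E1: "vanishes_below E 1" and "vanishes_below \<Psi> N"
    and ET: "\<And>n. coeff_vec E n \<in> T"
  shows "vanishes_below E N"
proof -
  have "vanishes_below E n" if "n \<le> N" for n
    using that
  proof (induction n)
    case (Suc n)
    then have En: "vanishes_below E n" by simp
    have "coeff_vec E n = 0"
    proof (cases "n = 0")
      case True
      with E1 show ?thesis by (simp add: vanishes_below_def)
    next
      case False
      have "coeff_vec \<Psi> n = 0"
        using \<open>vanishes_below \<Psi> N\<close> Suc.prems by (simp add: vanishes_below_def)
      then have "linC \<alpha> \<beta> X0 (coeff_vec E n) = 0"
        using coeff_vec_perturbed[OF G1 En, of \<alpha> \<beta> X0 \<Psi>] False eq by simp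
      with Tker ET show ?thesis by blast
    qed
    with En show ?case by (simp add: vanishes_below_Suc)
  qed (simp add: vanishes_below_def)
  then show ?thesis by simp
qed

lemma formal_solution_in_transversal_eq_0:
  assumes Tker: "T \<inter> {X. linC \<alpha> \<beta> X0 X = 0} = {0}"
    and Zeq: "\<And>k. fps_lin (linC_matrix \<alpha> \<beta> X0) Z k + fps_bilin \<alpha> Z Z k = 0"
    and Z1: "vanishes_below Z 1" and ZT: "\<And>n. coeff_vec Z n \<in> T"
  shows "coeff_vec Z n = 0"
proof -
  have "vanishes_below Z (Suc n)"
  proof (rule vanishes_below_transversal[OF Tker _ _ Z1 _ ZT])
    show "fps_lin (linC_matrix \<alpha> \<beta> X0) Z k + fps_bilin \<alpha> (\<lambda>i. 0) Z k + fps_bilin \<alpha> Z (\<lambda>i. 0) k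
        + fps_bilin \<alpha> Z Z k + 0 = 0" for k
      using Zeq[of k] by simp
  qed (simp_all add: vanishes_below_def)
  then show ?thesis by (simp add: vanishes_below_Suc)
qed

lemma leading_coeff_in_range:
  assumes Tker: "T \<inter> {X. linC \<alpha> \<beta> X0 X = 0} = {0}"
    and eq: "\<And>k. fps_lin (linC_matrix \<alpha> \<beta> X0) E k + fps_bilin \<alpha> G E k + fps_bilin \<alpha> E G k
                + fps_bilin \<alpha> E E k + f * W k = 0"
    and G1: "vanishes_below G 1" and E1: "vanishes_below E 1"
    and ET: "\<And>n. coeff_vec E n \<in> T"
    and f: "f \<noteq> 0" "fps_nth f 0 = 0"
  shows "coeff_vec W 0 \<in> range (linC \<alpha> \<beta> X0)"
proof -
  define N where "N = subdegree f"
  have N1: "1 \<le> N"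
    using f subdegree_eq_0_iff[of f] by (simp add: N_def Suc_le_eq)
  have low: "vanishes_below (\<lambda>k. f * W k) N"
    unfolding vanishes_below_def
  proof (intro allI impI)
    fix n assume "n < N"
    then have "fps_nth f i = 0" if "i \<le> n" for i
      using that unfolding N_def by (intro nth_less_subdegree_zero) linarith
    then show "coeff_vec (\<lambda>k. f * W k) n = 0"
      by (simp add: coeff_vec_def vec_eq_iff fps_mult_nth)
  qed
  have at_N: "coeff_vec (\<lambda>k. f * W k) N = fps_nth f N *\<^sub>R coeff_vec W 0"
    by (simp add: N_def coeff_vec_def vec_eq_iff)
  have "vanishes_below E N"
    by (rule vanishes_below_transversal[OF Tker eq G1 E1 low ET])
  then have "linC \<alpha> \<beta> X0 (coeff_vec E N) + fps_nth f N *\<^sub>R coeff_vec W 0 = 0"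
    using coeff_vec_perturbed[OF G1 _ N1, of E \<alpha> \<beta> X0 "\<lambda>k. f * W k"] eq
    by (simp only: at_N coeff_vec_zero)
  then have "fps_nth f N *\<^sub>R coeff_vec W 0 = - linC \<alpha> \<beta> X0 (coeff_vec E N)"
    by (simp add: eq_neg_iff_add_eq_0 add.commute)
  moreover have "fps_nth f N \<noteq> 0"
    using f by (simp add: N_def)
  ultimately have "coeff_vec W 0 = (- 1 / fps_nth f N) *\<^sub>R linC \<alpha> \<beta> X0 (coeff_vec E N)"
    by (metis (no_types, lifting) divide_minus_left scaleR_minus_left scaleR_minus_right
        scaleR_one scaleR_scaleR nonzero_divide_eq_eq)
  also have "\<dots> = linC \<alpha> \<beta> X0 ((- 1 / fps_nth f N) *\<^sub>R coeff_vec E N)"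
    by (rule linear_scale[OF linear_linC, symmetric])
  finally have "coeff_vec W 0 = linC \<alpha> \<beta> X0 ((- 1 / fps_nth f N) *\<^sub>R coeff_vec E N)" .
  then show ?thesis by blast
qed

section \<open>Solvability of the recursion\<close>

lemma truncated_series_equation:
  fixes Y :: "nat \<Rightarrow> real^'m::finite"
  assumes rec: "\<And>p. 1 \<le> p \<Longrightarrow> p < q \<Longrightarrow>
      linC \<alpha> \<beta> X0 (Y p) = - (\<Sum>l=1..p-1. bilinB \<alpha> (Y l) (Y (p - l)))"
    and P_def: "P = (\<lambda>i. \<Sum>p=1..q-1. fps_const (Y p $ i) * fps_X ^ p)"
  shows "vanishes_below (\<lambda>k. fps_lin (linC_matrix \<alpha> \<beta> X0) P k + fps_bilin \<alpha> P P k) q"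
    and "coeff_vec (\<lambda>k. fps_lin (linC_matrix \<alpha> \<beta> X0) P k + fps_bilin \<alpha> P P k) q
           = (\<Sum>l=1..q-1. bilinB \<alpha> (Y l) (Y (q - l)))"
proof -
  have P: "coeff_vec P s = (if 1 \<le> s \<and> s < q then Y s else 0)" for s
    by (auto simp: P_def coeff_vec_def fps_sum_nth vec_eq_iff mult_delta_right sum.delta)
  have quad: "(\<Sum>l=0..s. bilinB \<alpha> (coeff_vec P l) (coeff_vec P (s - l)))
      = (\<Sum>l=1..s-1. bilinB \<alpha> (Y l) (Y (s - l)))" if "s \<le> q" for s
  proof -
    have "(\<Sum>l=0..s. bilinB \<alpha> (coeff_vec P l) (coeff_vec P (s - l)))
        = (\<Sum>l=1..s-1. bilinB \<alpha> (coeff_vec P l) (coeff_vec P (s - l)))"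
      by (rule sum_atLeastAtMost_trim_ends) (simp_all add: P)
    also have "\<dots> = (\<Sum>l=1..s-1. bilinB \<alpha> (Y l) (Y (s - l)))"
      by (rule sum.cong) (use that in \<open>auto simp: P\<close>)
    finally show ?thesis .
  qed
  have coeff: "coeff_vec (\<lambda>k. fps_lin (linC_matrix \<alpha> \<beta> X0) P k + fps_bilin \<alpha> P P k) s
      = linC \<alpha> \<beta> X0 (coeff_vec P s) + (\<Sum>l=1..s-1. bilinB \<alpha> (Y l) (Y (s - l)))" if "s \<le> q" for s
    using that by (simp add: coeff_vec_fps_lin coeff_vec_fps_bilin quad)
  show "vanishes_below (\<lambda>k. fps_lin (linC_matrix \<alpha> \<beta> X0) P k + fps_bilin \<alpha> P P k) q"
    unfolding vanishes_below_def
  proof (intro allI impI)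
    fix s assume "s < q"
    then show "coeff_vec (\<lambda>k. fps_lin (linC_matrix \<alpha> \<beta> X0) P k + fps_bilin \<alpha> P P k) s = 0"
      using rec[of s] coeff[of s] by (cases "s = 0") (simp_all add: P linear_0[OF linear_linC])
  qed
  show "coeff_vec (\<lambda>k. fps_lin (linC_matrix \<alpha> \<beta> X0) P k + fps_bilin \<alpha> P P k) q
      = (\<Sum>l=1..q-1. bilinB \<alpha> (Y l) (Y (q - l)))"
    using coeff[of q] by (simp add: P linear_0[OF linear_linC])
qed

lemma truncated_series_compose:
  fixes Y :: "nat \<Rightarrow> real^'m::finite"
  assumes rec: "\<And>p. 1 \<le> p \<Longrightarrow> p < q \<Longrightarrow>
      linC \<alpha> \<beta> X0 (Y p) = - (\<Sum>l=1..p-1. bilinB \<alpha> (Y l) (Y (p - l)))"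
    and P_def: "P = (\<lambda>i. \<Sum>p=1..q-1. fps_const (Y p $ i) * fps_X ^ p)"
    and \<phi>0: "fps_nth \<phi> 0 = 0"
  obtains W where
    "\<And>k. fps_lin (linC_matrix \<alpha> \<beta> X0) (\<lambda>i. P i oo \<phi>) k
        + fps_bilin \<alpha> (\<lambda>i. P i oo \<phi>) (\<lambda>i. P i oo \<phi>) k = \<phi> ^ q * W k"
    and "coeff_vec W 0 = (\<Sum>l=1..q-1. bilinB \<alpha> (Y l) (Y (q - l)))"
proof
  let ?c = "linC_matrix \<alpha> \<beta> X0"
  define H where "H k = fps_shift q (fps_lin ?c P k + fps_bilin \<alpha> P P k)" for k
  note trunc = truncated_series_equation[OF rec P_def]
  have PH: "fps_lin ?c P k + fps_bilin \<alpha> P P k = fps_X ^ q * H k" for k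
    using trunc(1)
    by (intro fps_ext) (auto simp: H_def fps_X_power_mult_nth vanishes_below_def coeff_vec_def vec_eq_iff)
  show "fps_lin ?c (\<lambda>i. P i oo \<phi>) k + fps_bilin \<alpha> (\<lambda>i. P i oo \<phi>) (\<lambda>i. P i oo \<phi>) k
      = \<phi> ^ q * (H k oo \<phi>)" for k
  proof -
    have "fps_lin ?c (\<lambda>i. P i oo \<phi>) k + fps_bilin \<alpha> (\<lambda>i. P i oo \<phi>) (\<lambda>i. P i oo \<phi>) k
        = (fps_lin ?c P k + fps_bilin \<alpha> P P k) oo \<phi>"
      by (simp add: fps_compose_add_distrib fps_lin_compose fps_bilin_compose[OF \<phi>0])
    also have "\<dots> = \<phi> ^ q * (H k oo \<phi>)"
      by (simp add: PH fps_compose_mult_distrib[OF \<phi>0] fps_X_power_compose[OF \<phi>0])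
    finally show ?thesis .
  qed
  have "coeff_vec (\<lambda>k. H k oo \<phi>) 0 = coeff_vec (\<lambda>k. fps_lin ?c P k + fps_bilin \<alpha> P P k) q"
    unfolding coeff_vec_def H_def by simp
  then show "coeff_vec (\<lambda>k. H k oo \<phi>) 0 = (\<Sum>l=1..q-1. bilinB \<alpha> (Y l) (Y (q - l)))"
    using trunc(2) by simp
qed

lemma fps_quadratic_remainder:
  assumes "\<And>k. fps_lin c Z k + fps_bilin \<alpha> Z Z k = 0"
    and "\<And>k. fps_lin c G k + fps_bilin \<alpha> G G k = \<Psi> k"
    and E_def: "E = (\<lambda>i. Z i - G i)"
  shows "fps_lin c E k + fps_bilin \<alpha> G E k + fps_bilin \<alpha> E G k + fps_bilin \<alpha> E E k + \<Psi> k = 0"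
proof -
  have "Z = (\<lambda>i. G i + E i)" by (simp add: E_def)
  then show ?thesis
    using assms(1)[of k] by (simp add: fps_lin_add fps_bilin_add assms(2)[symmetric] algebra_simps)
qed

lemma obstruction_in_range:
  fixes Z :: "'m::finite \<Rightarrow> real fps" and Y :: "nat \<Rightarrow> real^'m"
  assumes Tsub: "subspace T" and Tker: "T \<inter> {X. linC \<alpha> \<beta> X0 X = 0} = {0}"
    and Zeq: "\<And>k. fps_lin (linC_matrix \<alpha> \<beta> X0) Z k + fps_bilin \<alpha> Z Z k = 0"
    and Z1: "vanishes_below Z 1"
    and ZT: "\<And>n. coeff_vec Z n - fps_nth \<phi> n *\<^sub>R Y 1 \<in> T"
    and \<phi>: "\<phi> \<noteq> 0" "fps_nth \<phi> 0 = 0"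
    and rec: "\<And>p. 1 \<le> p \<Longrightarrow> p < q \<Longrightarrow>
      linC \<alpha> \<beta> X0 (Y p) = - (\<Sum>l=1..p-1. bilinB \<alpha> (Y l) (Y (p - l)))"
    and YT: "\<And>p. 2 \<le> p \<Longrightarrow> p < q \<Longrightarrow> Y p \<in> T"
    and q: "2 \<le> q"
  shows "(\<Sum>l=1..q-1. bilinB \<alpha> (Y l) (Y (q - l))) \<in> range (linC \<alpha> \<beta> X0)"
proof -
  define P where "P = (\<lambda>i. \<Sum>p=1..q-1. fps_const (Y p $ i) * fps_X ^ p)"
  define G where "G = (\<lambda>i. P i oo \<phi>)"
  define E where "E = (\<lambda>i. Z i - G i)"
  obtain W where GW: "\<And>k. fps_lin (linC_matrix \<alpha> \<beta> X0) G k + fps_bilin \<alpha> G G k = \<phi> ^ q * W k"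
    and W0: "coeff_vec W 0 = (\<Sum>l=1..q-1. bilinB \<alpha> (Y l) (Y (q - l)))"
    using truncated_series_compose[OF rec P_def \<phi>(2)] unfolding G_def by blast
  have G_coeff: "coeff_vec G n = fps_nth \<phi> n *\<^sub>R Y 1 + (\<Sum>p=2..q-1. fps_nth (\<phi> ^ p) n *\<^sub>R Y p)" for n
  proof -
    have "coeff_vec G n = (\<Sum>p=1..q-1. fps_nth (\<phi> ^ p) n *\<^sub>R Y p)"
      by (simp add: G_def P_def coeff_vec_def vec_eq_iff fps_compose_sum_distrib fps_sum_nth
          fps_const_mult_apply_left[symmetric] fps_X_power_compose[OF \<phi>(2)] sum_component)
         (simp add: mult.commute)
    also have "\<dots> = fps_nth \<phi> n *\<^sub>R Y 1 + (\<Sum>p=2..q-1. fps_nth (\<phi> ^ p) n *\<^sub>R Y p)"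
      using q by (simp add: sum.atLeast_Suc_atMost numeral_2_eq_2)
    finally show ?thesis .
  qed
  have G1: "vanishes_below G 1"
    by (simp add: vanishes_below_def coeff_vec_def vec_eq_iff G_def P_def fps_sum_nth)
  have E1: "vanishes_below E 1"
    using Z1 G1 by (simp add: vanishes_below_def E_def)
  have ET: "coeff_vec E n \<in> T" for n
  proof -
    have "coeff_vec E n = (coeff_vec Z n - fps_nth \<phi> n *\<^sub>R Y 1) - (\<Sum>p=2..q-1. fps_nth (\<phi> ^ p) n *\<^sub>R Y p)"
      by (simp add: E_def G_coeff)
    also have "\<dots> \<in> T"
      by (intro subspace_diff[OF Tsub] ZT subspace_sum[OF Tsub] subspace_scale[OF Tsub] YT) auto
    finally show ?thesis .
  qed
  show ?thesis
    using leading_coeff_in_range[OF Tker fps_quadratic_remainder[OF Zeq GW E_def] G1 E1 ET] \<phi> q W0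
    by simp
qed

section \<open>From the analytic family to a formal solution\<close>

lemma fps_eq_0_if_eventually_eval_eq_0:
  fixes F :: "real fps"
  assumes r: "fps_conv_radius F > 0" and ev: "eventually (\<lambda>t. eval_fps F t = 0) (nhds 0)"
  shows "F = 0"
proof (rule ccontr)
  assume "F \<noteq> 0"
  define d where "d = subdegree F"
  define G where "G = fps_shift d F"
  have G0: "fps_nth G 0 \<noteq> 0"
    using \<open>F \<noteq> 0\<close> by (simp add: G_def d_def)
  have "continuous (at 0) (eval_fps G)"
    using r by (intro continuous_eval_fps) (simp add: G_def zero_ereal_def)
  then have "eventually (\<lambda>t. eval_fps G t \<noteq> 0) (at 0)"
    using G0 by (intro tendsto_imp_eventually_ne) (auto simp: continuous_def eval_fps_at_0)
  moreover have "eventually (\<lambda>t. t \<in> eball 0 (fps_conv_radius F)) (at (0::real))"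
    using r by (intro eventually_at_in_open') (auto simp: zero_ereal_def)
  moreover have "eventually (\<lambda>t. eval_fps F t = 0) (at 0)"
    using ev by (simp add: eventually_at_filter eventually_mono)
  moreover have "eventually (\<lambda>t::real. t \<noteq> 0) (at 0)"
    by (simp add: eventually_at_filter)
  ultimately have "eventually (\<lambda>t. eval_fps G t \<noteq> 0 \<and> t \<in> eball 0 (fps_conv_radius F)
      \<and> eval_fps F t = 0 \<and> t \<noteq> 0) (at (0::real))"
    by eventually_elim blast
  then obtain t :: real where t: "eval_fps G t \<noteq> 0" "t \<in> eball 0 (fps_conv_radius F)"
      "eval_fps F t = 0" "t \<noteq> 0"
    using eventually_happens trivial_limit_at by blast
  have "eval_fps G t = eval_fps F t / t ^ d"
    unfolding G_def using t by (subst eval_fps_shift) (auto simp: d_def)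
  with t show False by simp
qed

lemma has_fps_expansion_vec_nth:
  fixes Xs :: "nat \<Rightarrow> real^'m::finite"
  assumes R: "conv_radius Xs > 0"
  shows "(\<lambda>t. (\<Sum>p. t ^ p *\<^sub>R Xs p) $ i) has_fps_expansion Abs_fps (\<lambda>n. Xs n $ i)"
proof -
  have norm_summable: "summable (\<lambda>n. norm (Xs n) * r ^ n)" if "0 \<le> r" "ereal r < conv_radius Xs" for r :: real
    using abs_summable_in_conv_radius[of r "\<lambda>n. norm (Xs n)"] that by (simp add: abs_mult)
  have "conv_radius Xs \<le> fps_conv_radius (Abs_fps (\<lambda>n. Xs n $ i))"
    unfolding fps_conv_radius_def
  proof (rule conv_radius_geI_ex')
    fix r :: real assume r: "0 < r" "ereal r < conv_radius Xs"
    show "summable (\<lambda>n. fps_nth (Abs_fps (\<lambda>n. Xs n $ i)) n * of_real r ^ n)"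
      by (rule summable_comparison_test[OF _ norm_summable[OF _ r(2)]])
         (use r(1) in \<open>auto simp: abs_mult intro!: mult_right_mono component_le_norm_cart\<close>)
  qed
  with R have "fps_conv_radius (Abs_fps (\<lambda>n. Xs n $ i)) > 0" by order
  moreover have "eventually (\<lambda>t. t \<in> eball 0 (conv_radius Xs)) (nhds (0::real))"
    using R by (intro eventually_nhds_in_open) (auto simp: zero_ereal_def)
  then have "eventually (\<lambda>t. ereal \<bar>t\<bar> < conv_radius Xs) (nhds (0::real))"
    by (rule eventually_mono) simp
  then have "eventually (\<lambda>t. eval_fps (Abs_fps (\<lambda>n. Xs n $ i)) t = (\<Sum>p. t ^ p *\<^sub>R Xs p) $ i) (nhds 0)"
  proof (rule eventually_mono)
    fix t :: real assume t: "ereal \<bar>t\<bar> < conv_radius Xs"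
    have "summable (\<lambda>n. t ^ n *\<^sub>R Xs n)"
      by (rule summable_comparison_test[OF _ norm_summable[OF _ t]]) (auto simp: power_abs mult.commute)
    then have "(\<Sum>p. t ^ p *\<^sub>R Xs p) $ i = (\<Sum>p. (t ^ p *\<^sub>R Xs p) $ i)"
      by (rule bounded_linear.suminf[OF bounded_linear_vec_nth])
    then show "eval_fps (Abs_fps (\<lambda>n. Xs n $ i)) t = (\<Sum>p. t ^ p *\<^sub>R Xs p) $ i"
      by (simp add: eval_fps_def mult.commute)
  qed
  ultimately show ?thesis
    unfolding has_fps_expansion_def by blast
qed

lemma analytic_family_formal_equation:
  assumes root: "quadF \<alpha> \<beta> \<gamma> X0 = 0" and fam: "analytic_family \<alpha> \<beta> \<gamma> X0 Xs"
    and Z_def: "Z = (\<lambda>i. Abs_fps (\<lambda>n. Xs n $ i) - fps_const (Xs 0 $ i))"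
  shows "fps_lin (linC_matrix \<alpha> \<beta> X0) Z k + fps_bilin \<alpha> Z Z k = 0"
proof -
  define Xt where "Xt t = (\<Sum>p. t ^ p *\<^sub>R Xs p)" for t :: real
  obtain \<epsilon> where R: "conv_radius Xs > 0" and X00: "Xs 0 = X0" and "\<epsilon> > 0"
    and zero: "\<And>t. \<bar>t\<bar> < \<epsilon> \<Longrightarrow> quadF \<alpha> \<beta> \<gamma> (Xt t) = 0"
    using fam unfolding analytic_family_def Xt_def by blast
  define f where "f t = (linC \<alpha> \<beta> X0 (Xt t - X0) + bilinB \<alpha> (Xt t - X0) (Xt t - X0)) $ k" for t
  have "(\<lambda>t. Xt t $ i - X0 $ i) has_fps_expansion Z i" for i
    unfolding Z_def Xt_def X00
    by (intro has_fps_expansion_diff has_fps_expansion_vec_nth R has_fps_expansion_const)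
  then have exp: "f has_fps_expansion (fps_lin (linC_matrix \<alpha> \<beta> X0) Z k + fps_bilin \<alpha> Z Z k)"
    unfolding f_def fps_lin_def fps_bilin_def
    by (simp add: linC_eq_matrix bilinB_def fps_expansion_intros)
  have "eventually (\<lambda>t. \<bar>t\<bar> < \<epsilon>) (nhds (0::real))"
    using \<open>\<epsilon> > 0\<close> by (simp add: eventually_nhds_metric dist_real_def) blast
  then have "eventually (\<lambda>t. f t = 0) (nhds 0)"
  proof (rule eventually_mono)
    fix t :: real assume "\<bar>t\<bar> < \<epsilon>"
    have "linC \<alpha> \<beta> X0 (Xt t - X0) + bilinB \<alpha> (Xt t - X0) (Xt t - X0) = quadF \<alpha> \<beta> \<gamma> (X0 + (Xt t - X0))"
      by (simp only: quadF_add root add_0_left)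
    also have "\<dots> = 0"
      using zero \<open>\<bar>t\<bar> < \<epsilon>\<close> by simp
    finally show "f t = 0" by (simp add: f_def)
  qed
  moreover have "eventually (\<lambda>t. eval_fps (fps_lin (linC_matrix \<alpha> \<beta> X0) Z k + fps_bilin \<alpha> Z Z k) t = f t) (nhds 0)"
    using exp unfolding has_fps_expansion_def by blast
  ultimately have "eventually (\<lambda>t. eval_fps (fps_lin (linC_matrix \<alpha> \<beta> X0) Z k + fps_bilin \<alpha> Z Z k) t = 0) (nhds 0)"
    by eventually_elim simp
  then show ?thesis
    using exp unfolding has_fps_expansion_def by (blast intro: fps_eq_0_if_eventually_eval_eq_0)
qed

lemma analytic_family_step_solvable:
  fixes Y :: "nat \<Rightarrow> real^'m::finite"
  assumes root: "quadF \<alpha> \<beta> \<gamma> X0 = 0" and fam: "analytic_family \<alpha> \<beta> \<gamma> X0 Xs"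
    and noncst: "nonconstant_series Xs"
    and Tsub: "subspace T" and Tker: "T \<inter> {X. linC \<alpha> \<beta> X0 X = 0} = {0}"
    and dec: "\<And>x. \<exists>c. x - c *\<^sub>R Y 1 \<in> T"
    and q: "2 \<le> q"
    and rec: "\<And>p. 1 \<le> p \<Longrightarrow> p < q \<Longrightarrow>
      linC \<alpha> \<beta> X0 (Y p) = - (\<Sum>l=1..p-1. bilinB \<alpha> (Y l) (Y (p - l)))"
    and YT: "\<And>p. 2 \<le> p \<Longrightarrow> p < q \<Longrightarrow> Y p \<in> T"
  shows "- (\<Sum>l=1..q-1. bilinB \<alpha> (Y l) (Y (q - l))) \<in> linC \<alpha> \<beta> X0 ` T"
proof -
  define Z where "Z = (\<lambda>i. Abs_fps (\<lambda>n. Xs n $ i) - fps_const (Xs 0 $ i))"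
  have Zeq: "fps_lin (linC_matrix \<alpha> \<beta> X0) Z k + fps_bilin \<alpha> Z Z k = 0" for k
    by (rule analytic_family_formal_equation[OF root fam Z_def])
  have Z_coeff: "coeff_vec Z n = (if n = 0 then 0 else Xs n)" for n
    by (simp add: Z_def coeff_vec_def vec_eq_iff)
  have Z1: "vanishes_below Z 1"
    by (simp add: vanishes_below_def Z_coeff)
  define \<phi> where "\<phi> = Abs_fps (\<lambda>n. if n = 0 then 0 else SOME c. coeff_vec Z n - c *\<^sub>R Y 1 \<in> T)"
  have ZT: "coeff_vec Z n - fps_nth \<phi> n *\<^sub>R Y 1 \<in> T" for n
  proof (cases "n = 0")
    case True
    then show ?thesis using subspace_0[OF Tsub] by (simp add: \<phi>_def Z_coeff)
  next
    case False
    then show ?thesis using someI_ex[OF dec[of "coeff_vec Z n"]] by (simp add: \<phi>_def)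
  qed
  have "\<phi> \<noteq> 0"
  proof
    assume "\<phi> = 0"
    then have "coeff_vec Z n = 0" for n
      using formal_solution_in_transversal_eq_0[OF Tker Zeq Z1] ZT by simp
    with noncst show False
      unfolding nonconstant_series_def by (metis Z_coeff not_one_le_zero)
  qed
  then have "(\<Sum>l=1..q-1. bilinB \<alpha> (Y l) (Y (q - l))) \<in> range (linC \<alpha> \<beta> X0)"
    by (intro obstruction_in_range[OF Tsub Tker Zeq Z1 ZT _ _ rec YT q]) (simp_all add: \<phi>_def)
  then obtain x where "(\<Sum>l=1..q-1. bilinB \<alpha> (Y l) (Y (q - l))) = linC \<alpha> \<beta> X0 x"
    by blast
  then have "- (\<Sum>l=1..q-1. bilinB \<alpha> (Y l) (Y (q - l))) \<in> range (linC \<alpha> \<beta> X0)"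
    by (simp add: linear_neg[OF linear_linC, symmetric])
  moreover have "linC \<alpha> \<beta> X0 (Y 1) = 0"
    using rec[of 1] q by simp
  then have "range (linC \<alpha> \<beta> X0) = linC \<alpha> \<beta> X0 ` T"
    using range_linear_eq_image_complement[OF linear_linC _ dec] by blast
  ultimately show ?thesis by simp
qed

theorem theorem6:
  fixes \<alpha> :: "'n::finite \<Rightarrow> 'm::finite \<Rightarrow> 'm \<Rightarrow> real"
    and \<beta> :: "'n \<Rightarrow> 'm \<Rightarrow> real" and \<gamma> :: "'n \<Rightarrow> real"
    and X0 :: "real^'m" and T :: "(real^'m) set" and Xs :: "nat \<Rightarrow> real^'m"
  assumes sym: "\<And>k i j. \<alpha> k i j = \<alpha> k j i"
    and root: "quadF \<alpha> \<beta> \<gamma> X0 = 0"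
    and ker1: "dim {X. linC \<alpha> \<beta> X0 X = 0} = 1"
    and Tsub: "subspace T" and Tcodim: "dim T = CARD('m) - 1"
    and Tker: "T \<inter> {X. linC \<alpha> \<beta> X0 X = 0} = {0}"
    and fam: "analytic_family \<alpha> \<beta> \<gamma> X0 Xs"
    and noncst: "nonconstant_series Xs"
  shows "\<exists>Ys. T_standard_formal_solution \<alpha> \<beta> X0 T Ys \<and> Ys 0 = X0"
proof -
  (* Neither the symmetry of alpha nor the exact value of dim ker C is needed:
     a nonzero kernel vector suffices. *)
  let ?L = "linC \<alpha> \<beta> X0"
  obtain v where v: "v \<noteq> 0" "?L v = 0"
    using ker1 dim_eq_0[of "{X. ?L X = 0}"] by auto
  have dec: "\<exists>c. x - c *\<^sub>R v \<in> T" for x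
    using Tker v by (intro codim1_decomposition[OF Tsub]) (auto simp: Tcodim)
  define Ys where "Ys = standard_coeffs ?L (bilinB \<alpha>) T X0 v"
  have Ys01: "Ys 0 = X0" "Ys 1 = v"
    by (simp_all add: Ys_def)
  have Ys: "(1 \<le> q \<longrightarrow> ?L (Ys q) = - (\<Sum>l=1..q-1. bilinB \<alpha> (Ys l) (Ys (q - l))))
      \<and> (2 \<le> q \<longrightarrow> Ys q \<in> T)" for q
    using standard_coeffs_solve[OF Ys_def v(2)
        analytic_family_step_solvable[where Y = Ys, OF root fam noncst Tsub Tker dec[folded Ys01(2)]]] .
  have "T_standard_formal_solution \<alpha> \<beta> X0 T Ys"
    unfolding T_standard_formal_solution_def using Ys v(1) Ys01(2) by simp
  with Ys01(1) show ?thesis by blast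
qed

end
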